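(* Let $U$ and $V$ be finite-dimensional vector spaces over a field $\mathbb{K}$. (a) Every range-compatible linear map on $\mathcal{L}(U,V)$ is local. (b) If $\dim V>1$, every range-compatible group homomorphism on $\mathcal{L}(U,V)$ is local.
   Context: A map $F:\mathcal{L}(U,V)\to V$ is range-compatible when $F(s)\in\operatorname{im}s$ for all $s$, and local when there is $x\in U$ with $F(s)=s(x)$ for all $s$. *)

theory Defs
  imports "HOL.Vector_Spaces"
begin

text \<open>The space L(U,V) is the set of K-linear maps s :: 'u => 'v, with pointwise
operations.  A map F on L(U,V) is a function ('u => 'v) => 'v, only relevant on
linear arguments.\<close>

definition Lmaps :: "('k::field \<Rightarrow> 'u::ab_group_add \<Rightarrow> 'u) \<Rightarrow> ('k \<Rightarrow> 'v::ab_group_add \<Rightarrow> 'v) \<Rightarrow> ('u \<Rightarrow> 'v) set"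
  where "Lmaps sU sV = {s. Vector_Spaces.linear sU sV s}"

definition fin_dim :: "('k::field \<Rightarrow> 'u::ab_group_add \<Rightarrow> 'u) \<Rightarrow> bool"
  where "fin_dim sU \<longleftrightarrow> (\<exists>B. finite B \<and> module.span sU B = UNIV)"

definition range_compatible ::
  "('k::field \<Rightarrow> 'u::ab_group_add \<Rightarrow> 'u) \<Rightarrow> ('k \<Rightarrow> 'v::ab_group_add \<Rightarrow> 'v) \<Rightarrow> (('u \<Rightarrow> 'v) \<Rightarrow> 'v) \<Rightarrow> bool"
  where "range_compatible sU sV F \<longleftrightarrow> (\<forall>s \<in> Lmaps sU sV. F s \<in> range s)"

definition local_map ::
  "('k::field \<Rightarrow> 'u::ab_group_add \<Rightarrow> 'u) \<Rightarrow> ('k \<Rightarrow> 'v::ab_group_add \<Rightarrow> 'v) \<Rightarrow> (('u \<Rightarrow> 'v) \<Rightarrow> 'v) \<Rightarrow> bool"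
  where "local_map sU sV F \<longleftrightarrow> (\<exists>x. \<forall>s \<in> Lmaps sU sV. F s = s x)"

definition additive_on_L ::
  "('k::field \<Rightarrow> 'u::ab_group_add \<Rightarrow> 'u) \<Rightarrow> ('k \<Rightarrow> 'v::ab_group_add \<Rightarrow> 'v) \<Rightarrow> (('u \<Rightarrow> 'v) \<Rightarrow> 'v) \<Rightarrow> bool"
  where "additive_on_L sU sV F \<longleftrightarrow>
    (\<forall>s \<in> Lmaps sU sV. \<forall>t \<in> Lmaps sU sV. F (\<lambda>x. s x + t x) = F s + F t)"

definition linear_on_L ::
  "('k::field \<Rightarrow> 'u::ab_group_add \<Rightarrow> 'u) \<Rightarrow> ('k \<Rightarrow> 'v::ab_group_add \<Rightarrow> 'v) \<Rightarrow> (('u \<Rightarrow> 'v) \<Rightarrow> 'v) \<Rightarrow> bool"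
  where "linear_on_L sU sV F \<longleftrightarrow> additive_on_L sU sV F \<and>
    (\<forall>c. \<forall>s \<in> Lmaps sU sV. F (\<lambda>x. sV c (s x)) = sV c (F s))"

end

theory Submission
  imports Defs
begin

(*
  The proof probes F on rank-one maps  u \<mapsto> \<phi>(u)\<cdot>v  for a linear functional \<phi> on U.
  For fixed \<phi>, the map  g(v) = F(u \<mapsto> \<phi>(u)\<cdot>v)  is additive, and by range-compatibility
  every vector is an eigenvector of g.  An additive map with this property is a scalar
  multiple of the identity as soon as V contains two independent vectors, or as soon as
  g is itself K-linear; this is the only place where the two parts of the theorem differ.

  Once F(u \<mapsto> \<phi>(u)\<cdot>v) = a(\<phi>)\<cdot>v for every \<phi>, a basis b of U with coordinate functionals d_b
  yields the point x = \<Sum> a(d_b)\<cdot>b with F(u \<mapsto> \<phi>(u)\<cdot>v) = \<phi>(x)\<cdot>v, because \<phi> = \<Sum> \<phi>(b)\<cdot>d_b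
  and F is additive.  Finally, a basis of V writes every s \<in> L(U,V) as a finite sum of
  rank-one maps, so additivity gives F(s) = s(x).
*)

context vector_space
begin

text \<open>Vectors off the line through an eigenvector u share u's eigenvalue: otherwise
  the eigenvalue of their sum with u would force them onto that line.\<close>
lemma additive_eigen_off_line:
  assumes add: "\<And>v w. g (v + w) = g v + g w"
    and eigen: "\<And>v. \<exists>t. g v = t *s v"
    and u: "u \<noteq> 0" and v: "v \<notin> span {u}" and gu: "g u = a *s u"
  shows "g v = a *s v"
proof -
  obtain t where t: "g (v + u) = t *s (v + u)" using eigen by blast
  obtain b where b: "g v = b *s v" using eigen by blast
  have "b *s v + a *s u = t *s v + t *s u"
    using t b gu add[of v u] by (simp add: scale_right_distrib)
  hence relation: "(b - t) *s v = (t - a) *s u"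
    by (simp add: scale_left_diff_distrib algebra_simps)
  have "b = t"
  proof (rule ccontr)
    assume "b \<noteq> t"
    hence "v = (inverse (b - t) * (t - a)) *s u"
      using arg_cong[OF relation, of "scale (inverse (b - t))"] by simp
    thus False using v by (auto simp: span_singleton)
  qed
  with relation have "(t - a) *s u = 0" by simp
  with u have "t = a" by simp
  with b \<open>b = t\<close> show ?thesis by simp
qed

text \<open>With two independent vectors u and w, an additive map having every vector as an
  eigenvector is a homothety: points on the line of u are reached through v + w.\<close>
lemma additive_eigen_scalar_of_plane:
  assumes add: "\<And>v w. g (v + w) = g v + g w"
    and eigen: "\<And>v. \<exists>t. g v = t *s v"
    and u: "u \<noteq> 0" and w: "w \<notin> span {u}"
  shows "\<exists>a. \<forall>v. g v = a *s v"
proof -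
  obtain a where gu: "g u = a *s u" using eigen by blast
  have off_line: "g v = a *s v" if "v \<notin> span {u}" for v
    using additive_eigen_off_line[OF add eigen u that gu] .
  have "g v = a *s v" for v
  proof (cases "v \<in> span {u}")
    case True
    hence "v + w \<notin> span {u}"
      using w span_diff[of "v + w" "{u}" v] by auto
    hence "g v + g w = a *s v + a *s w"
      using off_line[of "v + w"] off_line[OF w] add[of v w] by (simp add: scale_right_distrib)
    thus ?thesis using off_line[OF w] by simp
  qed (rule off_line)
  thus ?thesis by blast
qed

lemma linear_eigen_scalar:
  assumes add: "\<And>v w. g (v + w) = g v + g w"
    and eigen: "\<And>v. \<exists>t. g v = t *s v"
    and hom: "\<And>c v. g (c *s v) = c *s g v"
  shows "\<exists>a. \<forall>v. g v = a *s v"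
proof (cases "\<exists>u :: 'b. u \<noteq> 0")
  case True
  then obtain u :: 'b where u: "u \<noteq> 0" by blast
  obtain a where gu: "g u = a *s u" using eigen by blast
  have "g v = a *s v" for v
  proof (cases "v \<in> span {u}")
    case True
    then obtain c where "v = c *s u" by (auto simp: span_singleton)
    thus ?thesis using hom gu by (simp add: mult.commute)
  qed (rule additive_eigen_off_line[OF add eigen u _ gu])
  thus ?thesis by blast
qed (metis (full_types))

lemma exists_off_line:
  assumes "dim (UNIV :: 'b set) > 1"
  shows "\<exists>w. w \<notin> span {u}"
proof (rule ccontr)
  assume "\<not> (\<exists>w. w \<notin> span {u})"
  hence "UNIV \<subseteq> span {u}" by blast
  from dim_le_card[OF this] have "dim (UNIV :: 'b set) \<le> 1" by simp
  with assms show False by simp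
qed

lemma fin_dim_basis:
  assumes "fin_dim scale"
  obtains B where "finite B" "independent B" "span B = UNIV"
proof -
  obtain S where S: "finite S" "span S = UNIV" using assms unfolding fin_dim_def by blast
  obtain B where B: "independent B" "UNIV \<subseteq> span B" using basis_exists[of UNIV] by blast
  have "finite B" using independent_span_bound[OF S(1) B(1)] S(2) by blast
  with B that show ?thesis by blast
qed

lemma functional_basis_expansion:
  assumes "finite B" "independent B" "span B = UNIV" and "Vector_Spaces.linear scale (*) \<phi>"
  shows "\<phi> u = (\<Sum>b\<in>B. \<phi> b * representation B u b)"
proof -
  interpret phi: Vector_Spaces.linear scale "(*)" \<phi> by fact
  have "u = (\<Sum>b\<in>B. representation B u b *s b)"
    using sum_representation_eq[of B u B] assms(1-3) by simp
  hence "\<phi> u = \<phi> (\<Sum>b\<in>B. representation B u b *s b)" by (rule arg_cong)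
  thus ?thesis by (simp add: phi.sum phi.scale mult.commute)
qed

end

definition rank_one :: "('k \<Rightarrow> 'v \<Rightarrow> 'v) \<Rightarrow> ('u \<Rightarrow> 'k) \<Rightarrow> 'v \<Rightarrow> 'u \<Rightarrow> 'v"
  where "rank_one sV \<phi> v = (\<lambda>u. sV (\<phi> u) v)"

lemma (in vector_space_pair) linear_rank_one:
  assumes "Vector_Spaces.linear s1 (*) \<phi>"
  shows "Vector_Spaces.linear s1 s2 (rank_one s2 \<phi> v)"
  using assms unfolding linear_iff rank_one_def
  by (auto simp: vs1.vector_space_axioms vs2.vector_space_axioms
      vs2.scale_left_distrib vs2.scale_scale)

context vector_space
begin

lemma rank_one_add_vector:
  "rank_one scale \<phi> (v + w) = (\<lambda>u. rank_one scale \<phi> v u + rank_one scale \<phi> w u)"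
  by (simp add: rank_one_def scale_right_distrib)

lemma rank_one_scale_vector:
  "rank_one scale \<phi> (c *s v) = (\<lambda>u. c *s rank_one scale \<phi> v u)"
  by (simp add: rank_one_def mult.commute)

lemma rank_one_scale_functional:
  "rank_one scale (\<lambda>u. c * \<phi> u) v = rank_one scale \<phi> (c *s v)"
  by (simp add: rank_one_def mult.commute)

lemma rank_one_sum_functional:
  "rank_one scale (\<lambda>u. \<Sum>i\<in>I. \<phi> i u) v = (\<lambda>u. \<Sum>i\<in>I. rank_one scale (\<phi> i) v u)"
  by (simp add: rank_one_def scale_sum_left)

end

locale additive_range_compatible = vector_space_pair sU sV
  for sU :: "'k::field \<Rightarrow> 'u::ab_group_add \<Rightarrow> 'u"
    and sV :: "'k \<Rightarrow> 'v::ab_group_add \<Rightarrow> 'v"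
    and F :: "('u \<Rightarrow> 'v) \<Rightarrow> 'v" +
  assumes additive: "additive_on_L sU sV F"
    and compatible: "range_compatible sU sV F"
begin

abbreviation functional :: "('u \<Rightarrow> 'k) \<Rightarrow> bool"
  where "functional \<phi> \<equiv> Vector_Spaces.linear sU (*) \<phi>"

lemma rank_one_in_L: "functional \<phi> \<Longrightarrow> rank_one sV \<phi> v \<in> Lmaps sU sV"
  unfolding Lmaps_def using linear_rank_one by blast

lemma F_sum:
  assumes "finite I" "\<And>i. i \<in> I \<Longrightarrow> s i \<in> Lmaps sU sV"
  shows "F (\<lambda>u. \<Sum>i\<in>I. s i u) = (\<Sum>i\<in>I. F (s i))"
  using assms
proof (induction I rule: finite_induct)
  case empty
  have "(\<lambda>u. 0) \<in> Lmaps sU sV" unfolding Lmaps_def by (simp add: linear_zero)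
  then show ?case using additive unfolding additive_on_L_def by fastforce
next
  case (insert i I)
  have "(\<lambda>u. \<Sum>i\<in>I. s i u) \<in> Lmaps sU sV"
    using insert.prems unfolding Lmaps_def by (auto intro: linear_compose_sum)
  moreover have "s i \<in> Lmaps sU sV" using insert.prems by blast
  ultimately show ?case
    using additive insert unfolding additive_on_L_def by (simp add: sum.insert)
qed

lemma rank_one_additive:
  assumes "functional \<phi>"
  shows "F (rank_one sV \<phi> (v + w)) = F (rank_one sV \<phi> v) + F (rank_one sV \<phi> w)"
  using additive rank_one_in_L[OF assms] unfolding additive_on_L_def vs2.rank_one_add_vector
  by blast

lemma rank_one_eigen:
  assumes "functional \<phi>"
  shows "\<exists>t. F (rank_one sV \<phi> v) = sV t v"
  using compatible rank_one_in_L[OF assms]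
  unfolding range_compatible_def by (auto simp: rank_one_def)

lemma rank_one_scalar_of_plane:
  assumes "vs2.dim (UNIV :: 'v set) > 1" and "functional \<phi>"
  shows "\<exists>a. \<forall>v. F (rank_one sV \<phi> v) = sV a v"
proof -
  obtain u :: 'v where u: "u \<noteq> 0"
    using vs2.exists_off_line[OF assms(1), of 0] vs2.span_zero by metis
  obtain w where "w \<notin> vs2.span {u}" using vs2.exists_off_line[OF assms(1)] by blast
  then show ?thesis
    using vs2.additive_eigen_scalar_of_plane[OF rank_one_additive[OF assms(2)]
        rank_one_eigen[OF assms(2)] u] by blast
qed

lemma rank_one_scalar_of_linear:
  assumes "linear_on_L sU sV F" and "functional \<phi>"
  shows "\<exists>a. \<forall>v. F (rank_one sV \<phi> v) = sV a v"
proof (rule vs2.linear_eigen_scalar)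
  show "F (rank_one sV \<phi> (sV c v)) = sV c (F (rank_one sV \<phi> v))" for c v
    using assms rank_one_in_L unfolding linear_on_L_def vs2.rank_one_scale_vector by blast
qed (use rank_one_additive[OF assms(2)] rank_one_eigen[OF assms(2)] in blast)+

lemma rank_one_evaluation:
  assumes "fin_dim sU"
    and scalar: "\<And>\<phi>. functional \<phi> \<Longrightarrow> \<exists>a. \<forall>v. F (rank_one sV \<phi> v) = sV a v"
  shows "\<exists>x. \<forall>\<phi> v. functional \<phi> \<longrightarrow> F (rank_one sV \<phi> v) = sV (\<phi> x) v"
proof -
  obtain B where B: "finite B" "vs1.independent B" "vs1.span B = UNIV"
    using vs1.fin_dim_basis[OF assms(1)] by blast
  define d where "d b = (\<lambda>u. vs1.representation B u b)" for b
  have d: "functional (d b)" for b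
    unfolding d_def by (rule vs1.linear_representation[OF B(2,3)])
  have "\<forall>b. \<exists>a. \<forall>v. F (rank_one sV (d b) v) = sV a v" using scalar[OF d] by blast
  then obtain a where a: "\<forall>b v. F (rank_one sV (d b) v) = sV (a b) v"
    by (rule exE[OF choice])
  define x where "x = (\<Sum>b\<in>B. sU (a b) b)"
  have "F (rank_one sV \<phi> v) = sV (\<phi> x) v" if \<phi>: "functional \<phi>" for \<phi> v
  proof -
    interpret phi: Vector_Spaces.linear sU "(*)" \<phi> by fact
    have "\<phi> = (\<lambda>u. \<Sum>b\<in>B. \<phi> b * d b u)"
      unfolding d_def by (rule ext, rule vs1.functional_basis_expansion[OF B \<phi>])
    then have "rank_one sV \<phi> v = rank_one sV (\<lambda>u. \<Sum>b\<in>B. \<phi> b * d b u) v"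
      by (rule arg_cong)
    also have "\<dots> = (\<lambda>u. \<Sum>b\<in>B. rank_one sV (d b) (sV (\<phi> b) v) u)"
      unfolding vs2.rank_one_sum_functional vs2.rank_one_scale_functional ..
    finally have "F (rank_one sV \<phi> v) = (\<Sum>b\<in>B. F (rank_one sV (d b) (sV (\<phi> b) v)))"
      by (simp only: F_sum[OF B(1) rank_one_in_L[OF d]])
    also have "\<dots> = (\<Sum>b\<in>B. sV (a b) (sV (\<phi> b) v))" by (simp only: a)
    also have "\<dots> = sV (\<phi> x) v"
      by (simp add: x_def phi.sum phi.scale vs2.scale_sum_left mult.commute)
    finally show ?thesis .
  qed
  thus ?thesis by blast
qed

text \<open>Every linear map is a finite sum of rank-one maps along a basis of V, so the
  previous point x witnesses locality.\<close>
lemma local_of_rank_one_evaluation: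
  assumes "fin_dim sV"
    and eval: "\<And>\<phi> v. functional \<phi> \<Longrightarrow> F (rank_one sV \<phi> v) = sV (\<phi> x) v"
  shows "local_map sU sV F"
proof -
  obtain E where E: "finite E" "vs2.independent E" "vs2.span E = UNIV"
    using vs2.fin_dim_basis[OF assms(1)] by blast
  have "F s = s x" if s: "s \<in> Lmaps sU sV" for s
  proof -
    define p where "p e = (\<lambda>u. vs2.representation E (s u) e)" for e
    have p: "functional (p e)" for e
      using Vector_Spaces.linear_compose[of sU sV s "(*)" "\<lambda>v. vs2.representation E v e"]
        s vs2.linear_representation[OF E(2,3)]
      unfolding Lmaps_def p_def comp_def by blast
    have expansion: "s = (\<lambda>u. \<Sum>e\<in>E. rank_one sV (p e) e u)"
      using vs2.sum_representation_eq[OF E(2) _ E(1)] E(3)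
      unfolding p_def rank_one_def by auto
    have "F s = (\<Sum>e\<in>E. F (rank_one sV (p e) e))"
      by (subst expansion, rule F_sum[OF E(1) rank_one_in_L[OF p]])
    also have "\<dots> = (\<Sum>e\<in>E. rank_one sV (p e) e x)"
      using eval[OF p] by (simp add: rank_one_def)
    also have "\<dots> = s x" using fun_cong[OF expansion, of x] by simp
    finally show ?thesis .
  qed
  thus ?thesis unfolding local_map_def by blast
qed

end

theorem proposition2p5:
  fixes sU :: "'k::field \<Rightarrow> 'u::ab_group_add \<Rightarrow> 'u"
    and sV :: "'k \<Rightarrow> 'v::ab_group_add \<Rightarrow> 'v"
  assumes "vector_space sU" and "vector_space sV"
    and "fin_dim sU" and "fin_dim sV"
  shows "(\<forall>F. linear_on_L sU sV F \<and> range_compatible sU sV F \<longrightarrow> local_map sU sV F)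
         \<and> (vector_space.dim sV (UNIV :: 'v set) > 1 \<longrightarrow>
           (\<forall>F. additive_on_L sU sV F \<and> range_compatible sU sV F \<longrightarrow> local_map sU sV F))"
proof -
  have pair: "vector_space_pair sU sV" using assms(1,2) by (simp add: vector_space_pair_def)
  have local: "local_map sU sV F"
    if rc: "additive_range_compatible sU sV F"
      and scalar: "\<And>\<phi>. Vector_Spaces.linear sU (*) \<phi> \<Longrightarrow> \<exists>a. \<forall>v. F (rank_one sV \<phi> v) = sV a v"
    for F
  proof -
    interpret additive_range_compatible sU sV F by (fact rc)
    obtain x where "\<forall>\<phi> v. functional \<phi> \<longrightarrow> F (rank_one sV \<phi> v) = sV (\<phi> x) v"
      using rank_one_evaluation[OF assms(3) scalar] by blast
    then show ?thesis using local_of_rank_one_evaluation[OF assms(4)] by blast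
  qed
  have rc: "additive_range_compatible sU sV F"
    if "additive_on_L sU sV F" "range_compatible sU sV F" for F
    using pair that by (simp add: additive_range_compatible_def additive_range_compatible_axioms_def)
  show ?thesis
  proof (intro conjI allI impI)
    fix F assume F: "linear_on_L sU sV F \<and> range_compatible sU sV F"
    then have "additive_range_compatible sU sV F" using rc linear_on_L_def by blast
    with F show "local_map sU sV F"
      using local additive_range_compatible.rank_one_scalar_of_linear by blast
  next
    fix F assume "vector_space.dim sV (UNIV :: 'v set) > 1"
      and F: "additive_on_L sU sV F \<and> range_compatible sU sV F"
    with rc show "local_map sU sV F"
      using local additive_range_compatible.rank_one_scalar_of_plane by blast
  qed
qed

end
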